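(* Let $U:\mathbb{R}^d\to\mathbb{R}$ be twice continuously differentiable with $\nabla U(0)=0$ and $\sup_x\|\mathrm{D}^2U(x)\|\le\mathtt{L}$, and assume there exist $\mathtt{m}>0$, $\mathtt{K}\ge0$ with $\mathrm{D}^2U(x)[y,y]\ge\mathtt{m}$ whenever $\|x\|\ge\mathtt{K}$, $\|y\|=1$. Let $\bar\gamma\in(0,\mathtt{m}/(4\mathtt{L}^2)]$, $\tilde{\mathtt{K}}=2\mathtt{K}(1+\mathtt{L}/\mathtt{m})$ and $\tilde b^{\mathrm U}_{\bar\gamma}=2d+[\max(\tilde{\mathtt{K}},2\sqrt{2d/\mathtt{m}})]^2(\bar\gamma\mathtt{L}^2+2\mathtt{L}+\mathtt{m}/2)$. Then for any $\gamma\in(0,\bar\gamma]$ and $x\in\mathbb{R}^d$, $$\int_{\mathbb{R}^d}\|y\|^2Q_\gamma(x,dy)\le\{1-\mathtt{m}\gamma/2\}\|x\|^2+\gamma\tilde b^{\mathrm U}_{\bar\gamma}.$$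
   Context: $Q_\gamma(x,A)=\int\mathbb{1}_A(x-\gamma\nabla U(x)+\sqrt{2\gamma}z)\varphi(z)dz$ is the unadjusted Langevin kernel, $\varphi$ the standard Gaussian density on $\mathbb{R}^d$. *)

theory Defs
  imports "HOL-Probability.Probability"
begin

definition std_gauss_dens :: "real^'n \<Rightarrow> real" where
  "std_gauss_dens z = (2 * pi) powr (- real CARD('n) / 2) * exp (- (norm z)\<^sup>2 / 2)"

definition ULA_kernel :: "(real^'n \<Rightarrow> real^'n) \<Rightarrow> real \<Rightarrow> real^'n \<Rightarrow> (real^'n) measure" where
  "ULA_kernel gradU \<gamma> x =
     distr (density lborel (\<lambda>z. ennreal (std_gauss_dens z))) borel
       (\<lambda>z. x - \<gamma> *\<^sub>R gradU x + sqrt (2 * \<gamma>) *\<^sub>R z)"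

end

theory Submission
  imports Defs
begin

text \<open>Under \<open>Q\<^sub>\<gamma>(x, \<cdot>)\<close> the next state is Gaussian with mean \<open>a = x - \<gamma> \<nabla>U(x)\<close> and covariance
  \<open>2\<gamma> I\<close>, so its second moment is \<open>\<parallel>a\<parallel>\<^sup>2 + 2\<gamma>d\<close>. The Hessian bound gives \<open>\<parallel>\<nabla>U(x)\<parallel> \<le> L\<parallel>x\<parallel>\<close>, and
  integrating the Hessian along the segment from \<open>0\<close> to \<open>x\<close> gives the dissipativity
  \<open>\<langle>x, \<nabla>U(x)\<rangle> \<ge> m\<parallel>x\<parallel>\<^sup>2/2\<close> for \<open>\<parallel>x\<parallel> \<ge> 2K(1 + L/m)\<close>. Expanding \<open>\<parallel>a\<parallel>\<^sup>2\<close>, the step size condition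
  \<open>\<gamma>L\<^sup>2 \<le> m/4\<close> turns dissipativity into contraction far out, while near the origin everything is
  absorbed into the constant.\<close>

section \<open>Second moments of the Gaussian and of the kernel\<close>

lemma power2_norm_eq_sum_Basis:
  fixes z :: "'a::euclidean_space"
  shows "(norm z)\<^sup>2 = (\<Sum>b\<in>Basis. (z \<bullet> b)\<^sup>2)"
  unfolding power2_norm_eq_inner by (subst euclidean_inner) (simp add: power2_eq_square)

lemma std_gauss_dens_nonneg: "0 \<le> std_gauss_dens z"
  unfolding std_gauss_dens_def by simp

lemma borel_measurable_std_gauss_dens[measurable]: "std_gauss_dens \<in> borel_measurable borel"
  unfolding std_gauss_dens_def by measurable

lemma std_gauss_dens_uminus: "std_gauss_dens (- z) = std_gauss_dens z"
  by (simp add: std_gauss_dens_def)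

lemma std_gauss_dens_eq_prod:
  "std_gauss_dens (z::real^'n) = (\<Prod>b\<in>Basis. std_normal_density (z \<bullet> b))"
proof -
  have "(2 * pi) powr (- real CARD('n) / 2) = ((2 * pi) powr (- (1 / 2))) ^ CARD('n)"
    by (subst powr_power) auto
  also have "\<dots> = (\<Prod>b\<in>(Basis::(real^'n) set). 1 / sqrt (2 * pi))"
    by (simp add: powr_minus_divide powr_half_sqrt)
  finally have const: "(2 * pi) powr (- real CARD('n) / 2) = (\<Prod>b\<in>(Basis::(real^'n) set). 1 / sqrt (2 * pi))" .
  have exponent: "exp (- (norm z)\<^sup>2 / 2) = (\<Prod>b\<in>Basis. exp (- (z \<bullet> b)\<^sup>2 / 2))"
    by (simp add: power2_norm_eq_sum_Basis exp_sum[symmetric] sum_negf sum_divide_distrib)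
  show ?thesis
    unfolding std_gauss_dens_def std_normal_density_def const exponent by (rule prod.distrib[symmetric])
qed

lemma nn_integral_std_normal_moment_even:
  "(\<integral>\<^sup>+t. ennreal (std_normal_density t * t ^ (2 * k)) \<partial>lborel) = ennreal (fact (2 * k) / (2 ^ k * fact k))"
  using std_normal_moment_even[of k]
  by (subst nn_integral_eq_integral) (auto simp: has_bochner_integral_iff normal_density_nonneg)

lemma nn_integral_std_gauss_dens: "(\<integral>\<^sup>+z. ennreal (std_gauss_dens (z::real^'n)) \<partial>lborel) = 1"
proof -
  have "(\<integral>\<^sup>+z. ennreal (std_gauss_dens (z::real^'n)) \<partial>lborel)
      = (\<integral>\<^sup>+z. (\<Prod>b\<in>Basis. (\<lambda>_ t. ennreal (std_normal_density t)) b ((z::real^'n) \<bullet> b)) \<partial>lborel)"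
    by (simp add: std_gauss_dens_eq_prod prod_ennreal normal_density_nonneg)
  also have "\<dots> = (\<Prod>b\<in>(Basis::(real^'n) set). \<integral>\<^sup>+t. ennreal (std_normal_density t) \<partial>lborel)"
    by (rule nn_integral_lborel_prod) auto
  finally show ?thesis
    using nn_integral_std_normal_moment_even[of 0] by simp
qed

lemma nn_integral_std_gauss_dens_norm_sq:
  "(\<integral>\<^sup>+z. ennreal (std_gauss_dens (z::real^'n)) * ennreal ((norm z)\<^sup>2) \<partial>lborel) = CARD('n)"
proof -
  define f :: "real^'n \<Rightarrow> real^'n \<Rightarrow> real \<Rightarrow> ennreal"
    where "f c b t = ennreal (std_normal_density t * (if b = c then t\<^sup>2 else 1))" for c b t
  have split: "ennreal (std_gauss_dens z) * ennreal ((norm z)\<^sup>2) = (\<Sum>c\<in>Basis. \<Prod>b\<in>Basis. f c b (z \<bullet> b))"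
    for z :: "real^'n"
  proof -
    have "(\<Prod>b\<in>Basis. std_normal_density (z \<bullet> b) * (if b = c then (z \<bullet> b)\<^sup>2 else 1))
        = std_gauss_dens z * (z \<bullet> c)\<^sup>2" if "c \<in> Basis" for c
      using that by (simp add: prod.distrib std_gauss_dens_eq_prod prod.delta)
    then have "std_gauss_dens z * (norm z)\<^sup>2
        = (\<Sum>c\<in>Basis. \<Prod>b\<in>Basis. std_normal_density (z \<bullet> b) * (if b = c then (z \<bullet> b)\<^sup>2 else 1))"
      by (simp add: power2_norm_eq_sum_Basis sum_distrib_left)
    then show ?thesis
      unfolding f_def
      by (simp add: ennreal_mult''[symmetric] std_gauss_dens_nonneg sum_ennreal[symmetric]
          prod_ennreal[symmetric] normal_density_nonneg prod_nonneg sum_nonneg)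
  qed
  have moment: "(\<integral>\<^sup>+t. f c b t \<partial>lborel) = 1" for b c
    using nn_integral_std_normal_moment_even[of 0] nn_integral_std_normal_moment_even[of 1]
    by (cases "b = c") (simp_all add: f_def)
  have "(\<integral>\<^sup>+z. ennreal (std_gauss_dens (z::real^'n)) * ennreal ((norm z)\<^sup>2) \<partial>lborel)
      = (\<Sum>c\<in>(Basis::(real^'n) set). \<integral>\<^sup>+z. (\<Prod>b\<in>Basis. f c b (z \<bullet> b)) \<partial>lborel)"
    unfolding split by (rule nn_integral_sum) (auto simp: f_def)
  also have "\<dots> = (\<Sum>c\<in>(Basis::(real^'n) set). \<Prod>b\<in>(Basis::(real^'n) set). \<integral>\<^sup>+t. f c b t \<partial>lborel)"
    by (intro sum.cong refl nn_integral_lborel_prod) (auto simp: f_def normal_density_nonneg)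
  finally show ?thesis
    by (simp add: moment)
qed

lemma nn_integral_lborel_uminus:
  fixes f :: "'a::euclidean_space \<Rightarrow> ennreal"
  assumes [measurable]: "f \<in> borel_measurable borel"
  shows "(\<integral>\<^sup>+z. f (- z) \<partial>lborel) = (\<integral>\<^sup>+z. f z \<partial>lborel)"
  by (subst (2) lborel_affine[of "-1" 0]) (simp_all add: nn_integral_density nn_integral_distr)

lemma parallelogram_law:
  fixes a z :: "'a::real_inner"
  shows "(norm (a + z))\<^sup>2 + (norm (a - z))\<^sup>2 = 2 * (norm a)\<^sup>2 + 2 * (norm z)\<^sup>2"
  unfolding power2_norm_eq_inner
  by (simp add: inner_add_left inner_add_right inner_diff_left inner_diff_right inner_commute)

text \<open>The cross term vanishes by symmetry of the Gaussian: average the integrand at \<open>z\<close> and \<open>- z\<close>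
  and use the parallelogram law.\<close>

lemma nn_integral_std_gauss_dens_shifted_norm_sq:
  fixes a :: "real^'n"
  shows "(\<integral>\<^sup>+z. ennreal (std_gauss_dens z) * ennreal ((norm (a + s *\<^sub>R z))\<^sup>2) \<partial>lborel)
    = ennreal ((norm a)\<^sup>2 + s\<^sup>2 * CARD('n))" (is "?I = _")
proof -
  have reflected: "?I = (\<integral>\<^sup>+z. ennreal (std_gauss_dens z) * ennreal ((norm (a - s *\<^sub>R z))\<^sup>2) \<partial>lborel)"
    by (subst nn_integral_lborel_uminus[symmetric]) (simp_all add: std_gauss_dens_uminus)
  have average: "ennreal (std_gauss_dens z) * ennreal ((norm (a + s *\<^sub>R z))\<^sup>2)
      + ennreal (std_gauss_dens z) * ennreal ((norm (a - s *\<^sub>R z))\<^sup>2)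
      = ennreal (2 * (norm a)\<^sup>2) * ennreal (std_gauss_dens z)
        + ennreal (2 * s\<^sup>2) * (ennreal (std_gauss_dens z) * ennreal ((norm z)\<^sup>2))" for z :: "real^'n"
  proof -
    have "std_gauss_dens z * (norm (a + s *\<^sub>R z))\<^sup>2 + std_gauss_dens z * (norm (a - s *\<^sub>R z))\<^sup>2
        = 2 * (norm a)\<^sup>2 * std_gauss_dens z + 2 * s\<^sup>2 * (std_gauss_dens z * (norm z)\<^sup>2)"
      by (simp only: distrib_left[symmetric] parallelogram_law) (simp add: algebra_simps power_mult_distrib)
    then show ?thesis
      by (simp add: ennreal_mult''[symmetric] ennreal_plus[symmetric] std_gauss_dens_nonneg del: ennreal_plus)
  qed
  have "?I + ?I = ennreal (2 * (norm a)\<^sup>2) * 1 + ennreal (2 * s\<^sup>2) * CARD('n)"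
    by (subst (2) reflected, subst nn_integral_add[symmetric])
      (auto simp: average nn_integral_add nn_integral_cmult nn_integral_std_gauss_dens
        nn_integral_std_gauss_dens_norm_sq)
  also have "\<dots> = ennreal (2 * (norm a)\<^sup>2 + real CARD('n) * (2 * s\<^sup>2))"
    by (simp add: ennreal_mult''[symmetric] ennreal_plus[symmetric] algebra_simps
        ennreal_of_nat_eq_real_of_nat del: ennreal_plus)
  also have "\<dots> = ennreal ((norm a)\<^sup>2 + s\<^sup>2 * CARD('n)) * ennreal 2"
    by (subst ennreal_mult[symmetric]) (auto simp: algebra_simps)
  finally have "?I * ennreal 2 = ennreal ((norm a)\<^sup>2 + s\<^sup>2 * CARD('n)) * ennreal 2"
    by (simp add: mult_2_right)
  then show ?thesis
    by (subst (asm) mult_right_ennreal_cancel) simp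
qed

lemma nn_integral_ULA_kernel_norm_sq:
  fixes x :: "real^'n"
  assumes "0 \<le> \<gamma>"
  shows "(\<integral>\<^sup>+ y. ennreal ((norm y)\<^sup>2) \<partial>ULA_kernel gradU \<gamma> x)
    = ennreal ((norm (x - \<gamma> *\<^sub>R gradU x))\<^sup>2 + 2 * \<gamma> * CARD('n))"
proof -
  have "(\<integral>\<^sup>+ y. ennreal ((norm y)\<^sup>2) \<partial>ULA_kernel gradU \<gamma> x)
      = (\<integral>\<^sup>+ z. ennreal (std_gauss_dens z)
           * ennreal ((norm (x - \<gamma> *\<^sub>R gradU x + sqrt (2 * \<gamma>) *\<^sub>R z))\<^sup>2) \<partial>lborel)"
    unfolding ULA_kernel_def by (subst nn_integral_distr) (auto simp: nn_integral_density)
  also have "\<dots> = ennreal ((norm (x - \<gamma> *\<^sub>R gradU x))\<^sup>2 + (sqrt (2 * \<gamma>))\<^sup>2 * CARD('n))"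
    by (rule nn_integral_std_gauss_dens_shifted_norm_sq)
  finally show ?thesis
    using assms by simp
qed

section \<open>Dissipativity of the gradient\<close>

lemma abs_inner_le_onorm_mult_norm_sq:
  fixes A :: "'a::real_inner \<Rightarrow> 'a"
  assumes "bounded_linear A"
  shows "\<bar>v \<bullet> A v\<bar> \<le> onorm A * (norm v)\<^sup>2"
proof -
  have "\<bar>v \<bullet> A v\<bar> \<le> norm v * norm (A v)"
    by (rule Cauchy_Schwarz_ineq2)
  also have "\<dots> \<le> norm v * (onorm A * norm v)"
    using onorm[OF assms] by (simp add: mult_left_mono)
  finally show ?thesis
    by (simp add: power2_eq_square mult_ac)
qed

lemma quadratic_form_ge_of_unit_vectors:
  fixes A :: "'a::real_inner \<Rightarrow> 'a"
  assumes "linear A" and unit: "\<And>u. norm u = 1 \<Longrightarrow> m \<le> u \<bullet> A u"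
  shows "m * (norm v)\<^sup>2 \<le> v \<bullet> A v"
proof (cases "v = 0")
  case False
  define u where "u = inverse (norm v) *\<^sub>R v"
  have "v = norm v *\<^sub>R u"
    using False by (simp add: u_def)
  then have "v \<bullet> A v = (norm v)\<^sup>2 * (u \<bullet> A u)"
    using linear_scale[OF assms(1)] by (metis inner_scaleR_left inner_scaleR_right power2_eq_square mult.assoc)
  moreover have "m \<le> u \<bullet> A u"
    using False by (intro unit) (simp add: u_def)
  ultimately show ?thesis
    by (metis mult.commute mult_right_mono zero_le_power2)
qed (simp add: linear_0[OF assms(1)])

lemma DERIV_ge_imp_increment_ge:
  fixes g g' :: "real \<Rightarrow> real"
  assumes "a \<le> b"
    and deriv: "\<And>t. a \<le> t \<Longrightarrow> t \<le> b \<Longrightarrow> (g has_real_derivative g' t) (at t)"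
    and bound: "\<And>t. a \<le> t \<Longrightarrow> t \<le> b \<Longrightarrow> c \<le> g' t"
  shows "c * (b - a) \<le> g b - g a"
proof -
  have "g a - c * a \<le> g b - c * b"
  proof (rule DERIV_nonneg_imp_nondecreasing[OF \<open>a \<le> b\<close>])
    fix t assume "a \<le> t" "t \<le> b"
    then show "\<exists>y. ((\<lambda>t. g t - c * t) has_real_derivative y) (at t) \<and> 0 \<le> y"
      using deriv bound by (intro exI[of _ "g' t - c"]) (auto intro!: derivative_eq_intros)
  qed
  then show ?thesis
    by (simp add: algebra_simps)
qed

lemma norm_le_of_onorm_derivative_le:
  fixes F :: "'a::real_normed_vector \<Rightarrow> 'b::real_normed_vector"
  assumes "\<And>p. (F has_derivative F' p) (at p)" "\<And>p. onorm (F' p) \<le> L" "F 0 = 0"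
  shows "norm (F x) \<le> L * norm x"
  using differentiable_bound[of UNIV F F' L x 0] assms by simp

text \<open>Integrate \<open>t \<mapsto> x \<bullet> F (t *\<^sub>R x)\<close> over \<open>[0, 1]\<close>: the derivative is at least \<open>- L * (norm x)\<^sup>2\<close>
  everywhere and at least \<open>m * (norm x)\<^sup>2\<close> once \<open>t * norm x \<ge> K\<close>.\<close>

lemma inner_ge_of_convex_outside_ball:
  fixes F :: "'a::real_inner \<Rightarrow> 'a" and F' :: "'a \<Rightarrow> 'a \<Rightarrow> 'a"
  assumes deriv: "\<And>p. (F has_derivative F' p) (at p)" and "F 0 = 0"
    and lower: "\<And>p v. - L * (norm v)\<^sup>2 \<le> v \<bullet> F' p v"
    and convex_out: "\<And>p u. K \<le> norm p \<Longrightarrow> norm u = 1 \<Longrightarrow> m \<le> u \<bullet> F' p u"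
    and "0 \<le> K" "K \<le> norm x"
  shows "m * (norm x)\<^sup>2 - (m + L) * K * norm x \<le> x \<bullet> F x"
proof (cases "x = 0")
  case True
  then show ?thesis
    using \<open>0 \<le> K\<close> \<open>K \<le> norm x\<close> \<open>F 0 = 0\<close> by simp
next
  case False
  define s where "s = K / norm x"
  define g where "g t = x \<bullet> F (t *\<^sub>R x)" for t
  have linear: "linear (F' p)" for p
    using deriv[of p] by (simp add: has_derivative_linear)
  have g_deriv: "(g has_real_derivative x \<bullet> F' (t *\<^sub>R x) x) (at t)" for t
  proof -
    have "(g has_derivative (\<lambda>h. x \<bullet> F' (t *\<^sub>R x) (h *\<^sub>R x))) (at t)"
      unfolding g_def
      by (rule has_derivative_inner_right, rule has_derivative_compose[OF _ deriv, unfolded o_def])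
        (auto intro!: derivative_eq_intros)
    then show ?thesis
      by (simp add: has_field_derivative_def linear_scale[OF linear] mult_commute_abs)
  qed
  have s: "0 \<le> s" "s \<le> 1" "s * (norm x)\<^sup>2 = K * norm x"
    using False assms(5,6) by (simp_all add: s_def power2_eq_square)
  have "- L * (norm x)\<^sup>2 * (s - 0) \<le> g s - g 0"
    using s lower by (intro DERIV_ge_imp_increment_ge[OF _ g_deriv]) auto
  moreover have "m * (norm x)\<^sup>2 * (1 - s) \<le> g 1 - g s"
  proof (rule DERIV_ge_imp_increment_ge[OF _ g_deriv])
    fix t assume "s \<le> t" "t \<le> 1"
    then have "K \<le> t * norm x"
      using False by (simp add: s_def divide_le_eq)
    then have "K \<le> norm (t *\<^sub>R x)"
      using \<open>s \<le> t\<close> s(1) by simp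
    then show "m * (norm x)\<^sup>2 \<le> x \<bullet> F' (t *\<^sub>R x) x"
      by (intro quadratic_form_ge_of_unit_vectors linear convex_out)
  qed (use s in simp)
  moreover have "g 0 = 0" "g 1 = x \<bullet> F x"
    by (simp_all add: g_def \<open>F 0 = 0\<close>)
  ultimately show ?thesis
    using s by (simp add: algebra_simps)
qed

lemma inner_ge_half_of_convex_outside_ball:
  fixes F :: "'a::real_inner \<Rightarrow> 'a" and F' :: "'a \<Rightarrow> 'a \<Rightarrow> 'a"
  assumes "\<And>p. (F has_derivative F' p) (at p)" "F 0 = 0"
    and "\<And>p v. - L * (norm v)\<^sup>2 \<le> v \<bullet> F' p v"
    and "\<And>p u. K \<le> norm p \<Longrightarrow> norm u = 1 \<Longrightarrow> m \<le> u \<bullet> F' p u"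
    and "0 < m" "0 \<le> L" "0 \<le> K" and far: "2 * K * (1 + L / m) \<le> norm x"
  shows "m / 2 * (norm x)\<^sup>2 \<le> x \<bullet> F x"
proof -
  have "K \<le> 2 * K * (1 + L / m)"
    using \<open>0 < m\<close> \<open>0 \<le> L\<close> \<open>0 \<le> K\<close> by (simp add: field_simps)
  then have "K \<le> norm x"
    using far by (rule order.trans)
  then have "m * (norm x)\<^sup>2 - (m + L) * K * norm x \<le> x \<bullet> F x"
    using assms(1-4,7) by (intro inner_ge_of_convex_outside_ball[where F' = F']) auto
  moreover have "(m + L) * K * norm x \<le> m / 2 * (norm x)\<^sup>2"
  proof -
    have "2 * (m + L) * K \<le> m * norm x"
      using far \<open>0 < m\<close> by (simp add: field_simps)
    then have "2 * (m + L) * K * norm x \<le> m * norm x * norm x"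
      by (rule mult_right_mono) simp
    then show ?thesis
      by (simp add: power2_eq_square algebra_simps)
  qed
  ultimately show ?thesis
    by (simp add: power2_eq_square algebra_simps)
qed

section \<open>The drift inequality\<close>

lemma quadratic_drift_bound:
  fixes N p q \<gamma> \<gamma>bar L m R :: real
  assumes "0 \<le> N" "0 < m" "0 \<le> L" "0 < \<gamma>" "\<gamma> \<le> \<gamma>bar" and step: "\<gamma>bar * L\<^sup>2 \<le> m / 4"
    and q: "q \<le> L\<^sup>2 * N\<^sup>2" and p: "- p \<le> L * N\<^sup>2"
    and dissipative: "R < N \<Longrightarrow> m / 2 * N\<^sup>2 \<le> p"
  shows "N\<^sup>2 - 2 * \<gamma> * p + \<gamma>\<^sup>2 * q \<le> (1 - m * \<gamma> / 2) * N\<^sup>2 + \<gamma> * (R\<^sup>2 * (\<gamma>bar * L\<^sup>2 + 2 * L + m / 2))"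
proof -
  define C where "C = \<gamma>bar * L\<^sup>2 + 2 * L + m / 2"
  have "0 \<le> C"
    using assms(2-5) by (simp add: C_def)
  have "\<gamma>\<^sup>2 * q \<le> \<gamma> * (\<gamma> * L\<^sup>2) * N\<^sup>2"
    using mult_left_mono[OF q, of "\<gamma>\<^sup>2"] by (simp add: power2_eq_square mult_ac)
  also have "\<dots> \<le> \<gamma> * (\<gamma>bar * L\<^sup>2) * N\<^sup>2"
    using assms(4,5) by (intro mult_right_mono mult_left_mono) auto
  finally have noise: "\<gamma>\<^sup>2 * q \<le> \<gamma> * (\<gamma>bar * L\<^sup>2) * N\<^sup>2" .
  show ?thesis
  proof (cases "N \<le> R")
    case True
    have "- 2 * \<gamma> * p \<le> 2 * \<gamma> * (L * N\<^sup>2)"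
      using mult_left_mono[OF p, of "2 * \<gamma>"] \<open>0 < \<gamma>\<close> by simp
    then have "N\<^sup>2 - 2 * \<gamma> * p + \<gamma>\<^sup>2 * q \<le> (1 - m * \<gamma> / 2) * N\<^sup>2 + \<gamma> * (N\<^sup>2 * C)"
      using noise by (simp add: C_def algebra_simps)
    also have "\<dots> \<le> (1 - m * \<gamma> / 2) * N\<^sup>2 + \<gamma> * (R\<^sup>2 * C)"
      using True \<open>0 \<le> N\<close> \<open>0 \<le> C\<close> \<open>0 < \<gamma>\<close> by (simp add: power_mono mult_right_mono)
    finally show ?thesis
      by (simp add: C_def)
  next
    case False
    have "- 2 * \<gamma> * p \<le> - 2 * \<gamma> * (m / 2 * N\<^sup>2)"
      using dissipative False \<open>0 < \<gamma>\<close> by simp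
    moreover have "\<gamma> * (\<gamma>bar * L\<^sup>2) * N\<^sup>2 \<le> \<gamma> * (m / 4) * N\<^sup>2"
      using step \<open>0 < \<gamma>\<close> by (intro mult_right_mono mult_left_mono) auto
    moreover have "0 \<le> \<gamma> * (R\<^sup>2 * C) + \<gamma> * m / 4 * N\<^sup>2"
      using \<open>0 \<le> C\<close> \<open>0 < \<gamma>\<close> \<open>0 < m\<close> by simp
    ultimately show ?thesis
      using noise by (simp add: C_def algebra_simps)
  qed
qed

lemma norm_gradient_step_sq_le:
  fixes x g :: "'a::real_inner"
  assumes "0 < m" "0 \<le> L" "0 < \<gamma>" "\<gamma> \<le> \<gamma>bar" "\<gamma>bar * L\<^sup>2 \<le> m / 4"
    and lipschitz: "norm g \<le> L * norm x"
    and dissipative: "R < norm x \<Longrightarrow> m / 2 * (norm x)\<^sup>2 \<le> x \<bullet> g"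
  shows "(norm (x - \<gamma> *\<^sub>R g))\<^sup>2
    \<le> (1 - m * \<gamma> / 2) * (norm x)\<^sup>2 + \<gamma> * (R\<^sup>2 * (\<gamma>bar * L\<^sup>2 + 2 * L + m / 2))"
proof -
  have "\<bar>x \<bullet> g\<bar> \<le> L * (norm x)\<^sup>2"
    using Cauchy_Schwarz_ineq2[of x g] mult_left_mono[OF lipschitz norm_ge_zero[of x]]
    by (simp add: power2_eq_square mult_ac)
  moreover have "(norm g)\<^sup>2 \<le> L\<^sup>2 * (norm x)\<^sup>2"
    using power_mono[OF lipschitz norm_ge_zero, of 2] by (simp add: power_mult_distrib)
  moreover have "(norm (x - \<gamma> *\<^sub>R g))\<^sup>2 = (norm x)\<^sup>2 - 2 * \<gamma> * (x \<bullet> g) + \<gamma>\<^sup>2 * (norm g)\<^sup>2"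
    unfolding power2_norm_eq_inner
    by (simp add: inner_diff_left inner_diff_right inner_commute power2_eq_square)
  ultimately show ?thesis
    using assms by (simp add: quadratic_drift_bound)
qed

theorem lemma5:
  fixes U :: "real^'n \<Rightarrow> real"
    and gradU :: "real^'n \<Rightarrow> real^'n"
    and hessU :: "real^'n \<Rightarrow> real^'n^'n"
    and L m K \<gamma>bar \<gamma> :: real
    and x :: "real^'n"
  assumes grad: "\<And>x. (U has_derivative (\<lambda>h. gradU x \<bullet> h)) (at x)"
    and hess: "\<And>x. (gradU has_derivative (\<lambda>h. hessU x *v h)) (at x)"
    and hess_cont: "continuous_on UNIV hessU"
    and grad0: "gradU 0 = 0"
    and Lbound: "\<And>x. onorm (\<lambda>h. hessU x *v h) \<le> L"
    and m_pos: "m > 0" and K_nonneg: "K \<ge> 0"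
    and convex_out: "\<And>x y. norm x \<ge> K \<Longrightarrow> norm y = 1 \<Longrightarrow> y \<bullet> (hessU x *v y) \<ge> m"
    and gbar: "0 < \<gamma>bar" "\<gamma>bar \<le> m / (4 * L\<^sup>2)"
    and g: "0 < \<gamma>" "\<gamma> \<le> \<gamma>bar"
  shows "(\<integral>\<^sup>+ y. ennreal ((norm y)\<^sup>2) \<partial>ULA_kernel gradU \<gamma> x)
     \<le> ennreal ((1 - m * \<gamma> / 2) * (norm x)\<^sup>2 + \<gamma> *
          (2 * real CARD('n) +
           (max (2 * K * (1 + L / m)) (2 * sqrt (2 * real CARD('n) / m)))\<^sup>2
             * (\<gamma>bar * L\<^sup>2 + 2 * L + m / 2)))"
proof -
  define R where "R = max (2 * K * (1 + L / m)) (2 * sqrt (2 * real CARD('n) / m))"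
  have "0 \<le> L"
    using onorm_pos_le[OF matrix_vector_mul_bounded_linear] Lbound[of 0] by (rule order.trans)
  \<comment> \<open>\<open>L \<noteq> 0\<close>, since otherwise the junk value \<open>m / (4 * 0) = 0\<close> would force \<open>\<gamma>bar \<le> 0\<close>.\<close>
  moreover have "L \<noteq> 0"
    using gbar by auto
  ultimately have step: "\<gamma>bar * L\<^sup>2 \<le> m / 4"
    using gbar(2) by (simp add: field_simps)
  have hess_lower: "- L * (norm v)\<^sup>2 \<le> v \<bullet> (hessU p *v v)" for p v
    using abs_inner_le_onorm_mult_norm_sq[OF matrix_vector_mul_bounded_linear, of v "hessU p"]
      mult_right_mono[OF Lbound[of p], of "(norm v)\<^sup>2"] by (simp add: abs_le_iff)
  have "m / 2 * (norm x)\<^sup>2 \<le> x \<bullet> gradU x" if "R < norm x"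
    using that hess_lower \<open>0 \<le> L\<close> m_pos K_nonneg convex_out
    by (intro inner_ge_half_of_convex_outside_ball[OF hess grad0, of L K m]) (auto simp: R_def)
  moreover have "norm (gradU x) \<le> L * norm x"
    by (rule norm_le_of_onorm_derivative_le[OF hess Lbound grad0])
  ultimately have "(norm (x - \<gamma> *\<^sub>R gradU x))\<^sup>2
      \<le> (1 - m * \<gamma> / 2) * (norm x)\<^sup>2 + \<gamma> * (R\<^sup>2 * (\<gamma>bar * L\<^sup>2 + 2 * L + m / 2))"
    using m_pos \<open>0 \<le> L\<close> g step by (intro norm_gradient_step_sq_le)
  then show ?thesis
    unfolding nn_integral_ULA_kernel_norm_sq[OF less_imp_le[OF g(1)]] R_def[symmetric]
    by (intro ennreal_leI) (simp add: algebra_simps)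
qed

end
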